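(* Let $g:\mathbb{R}^n\to\mathbb{R}^n$ be polyhedral, convex, order-preserving and additively homogeneous, and let $\eta=\chi(g)$ be its cycle time. Assume that the half-line $w:t\mapsto t\eta+v$ is super-invariant for $g$. Then there exists a unique half-line invariant under $g$ which coincides with $w$ on the set of critical nodes of $g$ (i.e. whose value at $t$ has the same coordinates as $w(t)$ on that set for all $t$ large enough). It is given by $t\mapsto t\eta+\lim_{k\to\infty}\bar g^k(v)$, where $\bar g(y):=\hat g^{\eta}(y)-\eta$.
   Context: $g$ is order-preserving if $x\le y\Rightarrow g(x)\le g(y)$, additively homogeneous if $g(\lambda+x)=\lambda+g(x)$ for $\lambda\in\mathbb{R}$, convex if each coordinate is convex, polyhedral if $\mathbb{R}^n$ is covered by finitely many polyhedra on each of which $g$ is affine. For such $g$ the cycle time $\chi(g)=\lim_{k\to\infty}g^k(x)/k$ exists and is independent of $x$; the recession function $\hat g(\eta)=\lim_{t\to\infty}g(t\eta)/t$ and the tangent at infinity $\hat g^{\eta}(v)=\lim_{t\to\infty}\big(g(t\eta+v)-t\hat g(\eta)\big)$ exist and $g(t\eta+v)=t\hat g(\eta)+\hat g^{\eta}(v)$ for $t$ large. A half-line is a map $t\mapsto t\eta+v$ ($\eta,v\in\mathbb{R}^n$) for $t$ large, identified with its germ at infinity; it is invariant under $g$ if $g(t\eta+v)=(t+1)\eta+v$ for all $t$ large enough, and super-invariant if $g(t\eta+v)\le(t+1)\eta+v$ for all $t$ large enough. Such $g$ admits an invariant half-line, and its slope is $\chi(g)$. Harmonic vector of a map $\phi$: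 $\phi(u)=u$. For a convex order-preserving additively homogeneous $\phi$ with a harmonic vector $u$: $\partial\phi(u)=\{M: \phi(x)-\phi(u)\ge M(x-u)\ \forall x\}$ (stochastic matrices); a recurrence class of $M$ is a final communication class $F$ of $M$ with $M_{FF}$ stochastic; a node is critical for $\phi$ if it belongs to a recurrence class of some $M\in\partial\phi(u)$ (independent of $u$). The critical nodes of $g$ are defined as the critical nodes of $\bar g=\hat g^{\chi(g)}-\chi(g)$ (which has harmonic vector $v'$ whenever $t\mapsto t\chi(g)+v'$ is an invariant half-line of $g$). *)

theory Defs
  imports "HOL-Analysis.Analysis"
begin

text \<open>Maps g : R^n -> R^n are modelled as functions on real^'n ('n a finite index type,
  the coordinates / nodes). The order on real^'n is the componentwise order.\<close>

definition cvec :: "real \<Rightarrow> real^'n" where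
  "cvec c = (\<chi> i. c)"

definition order_preserving :: "(real^'n \<Rightarrow> real^'n) \<Rightarrow> bool" where
  "order_preserving g \<longleftrightarrow> (\<forall>x y. x \<le> y \<longrightarrow> g x \<le> g y)"

definition additively_homogeneous :: "(real^'n \<Rightarrow> real^'n) \<Rightarrow> bool" where
  "additively_homogeneous g \<longleftrightarrow> (\<forall>l x. g (cvec l + x) = cvec l + g x)"

definition coord_convex :: "(real^'n \<Rightarrow> real^'n) \<Rightarrow> bool" where
  "coord_convex g \<longleftrightarrow> (\<forall>i. convex_on UNIV (\<lambda>x. g x $ i))"

definition affine_on_set :: "(real^'n \<Rightarrow> real^'n) \<Rightarrow> (real^'n) set \<Rightarrow> bool" where
  "affine_on_set g S \<longleftrightarrow> (\<exists>(A::real^'n^'n) b. \<forall>x\<in>S. g x = A *v x + b)"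

definition polyhedral_map :: "(real^'n \<Rightarrow> real^'n) \<Rightarrow> bool" where
  "polyhedral_map g \<longleftrightarrow> (\<exists>\<P>. finite \<P> \<and> (\<forall>P\<in>\<P>. polyhedron P \<and> affine_on_set g P)
                                \<and> \<Union>\<P> = UNIV)"

text \<open>Cycle time: the limit of g^k(x)/k, which exists and is independent of x.\<close>
definition cycle_time :: "(real^'n \<Rightarrow> real^'n) \<Rightarrow> real^'n" where
  "cycle_time g = (THE \<eta>. \<forall>x. ((\<lambda>k. (1 / real k) *\<^sub>R (g ^^ k) x) \<longlongrightarrow> \<eta>) sequentially)"

definition recession :: "(real^'n \<Rightarrow> real^'n) \<Rightarrow> real^'n \<Rightarrow> real^'n" where
  "recession g \<eta> = Lim at_top (\<lambda>t::real. (1 / t) *\<^sub>R g (t *\<^sub>R \<eta>))"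

definition tangent_at_infinity :: "(real^'n \<Rightarrow> real^'n) \<Rightarrow> real^'n \<Rightarrow> real^'n \<Rightarrow> real^'n" where
  "tangent_at_infinity g \<eta> v = Lim at_top (\<lambda>t::real. g (t *\<^sub>R \<eta> + v) - t *\<^sub>R recession g \<eta>)"

definition gbar :: "(real^'n \<Rightarrow> real^'n) \<Rightarrow> real^'n \<Rightarrow> real^'n" where
  "gbar g y = tangent_at_infinity g (cycle_time g) y - cycle_time g"

text \<open>Half-lines t |-> t eta + v (germs at infinity).\<close>
definition invariant_halfline :: "(real^'n \<Rightarrow> real^'n) \<Rightarrow> real^'n \<Rightarrow> real^'n \<Rightarrow> bool" where
  "invariant_halfline g \<eta> v \<longleftrightarrow>
     (\<forall>\<^sub>F t in at_top. g (t *\<^sub>R \<eta> + v) = (t + 1) *\<^sub>R \<eta> + v)"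

definition super_invariant_halfline :: "(real^'n \<Rightarrow> real^'n) \<Rightarrow> real^'n \<Rightarrow> real^'n \<Rightarrow> bool" where
  "super_invariant_halfline g \<eta> v \<longleftrightarrow>
     (\<forall>\<^sub>F t in at_top. g (t *\<^sub>R \<eta> + v) \<le> (t + 1) *\<^sub>R \<eta> + v)"

definition stochastic :: "real^'n^'n \<Rightarrow> bool" where
  "stochastic M \<longleftrightarrow> (\<forall>i j. M $ i $ j \<ge> 0) \<and> (\<forall>i. (\<Sum>j\<in>UNIV. M $ i $ j) = 1)"

definition subdiff :: "(real^'n \<Rightarrow> real^'n) \<Rightarrow> real^'n \<Rightarrow> (real^'n^'n) set" where
  "subdiff \<phi> u = {M. stochastic M \<and> (\<forall>x. \<phi> x - \<phi> u \<ge> M *v (x - u))}"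

definition reach :: "real^'n^'n \<Rightarrow> 'n \<Rightarrow> 'n \<Rightarrow> bool" where
  "reach M i j \<longleftrightarrow> (i, j) \<in> {(a, b). M $ a $ b > 0}\<^sup>*"

definition communication_class :: "real^'n^'n \<Rightarrow> 'n set \<Rightarrow> bool" where
  "communication_class M F \<longleftrightarrow> (\<exists>i. F = {j. reach M i j \<and> reach M j i})"

definition recurrence_class :: "real^'n^'n \<Rightarrow> 'n set \<Rightarrow> bool" where
  "recurrence_class M F \<longleftrightarrow> communication_class M F
     \<and> (\<forall>i\<in>F. \<forall>j. j \<notin> F \<longrightarrow> M $ i $ j = 0)
     \<and> (\<forall>i\<in>F. (\<Sum>j\<in>F. M $ i $ j) = 1)"

definition critical_nodes_of :: "(real^'n \<Rightarrow> real^'n) \<Rightarrow> 'n set" where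
  "critical_nodes_of \<phi> = {i. \<exists>u. \<phi> u = u \<and> (\<exists>M\<in>subdiff \<phi> u. \<exists>F. recurrence_class M F \<and> i \<in> F)}"

definition critical_nodes :: "(real^'n \<Rightarrow> real^'n) \<Rightarrow> 'n set" where
  "critical_nodes g = critical_nodes_of (gbar g)"

end

theory Submission
  imports Defs "HOL-Computational_Algebra.Polynomial"
begin

text \<open>
  Since g is convex, polyhedral, order-preserving and additively homogeneous, it is the maximum of
  finitely many affine maps x \<mapsto> A x + b with A stochastic. By Brouwer's theorem each
  discounted map x \<mapsto> g(\<beta> x), \<beta> < 1, has a fixed point; for a sequence of \<beta> tending to 1 these
  fixed points solve one and the same discounted linear system, whose Laurent expansion at
  \<beta> = 1 yields an invariant half-line t \<mapsto> t \<eta> + h, whence \<eta> = \<chi>(g).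

  Along half-lines of slope \<eta> one has g(t \<eta> + y) = (t + 1) \<eta> + gbar(y), and gbar is again
  order-preserving and additively homogeneous. Invariant half-lines of slope \<eta> are the fixed
  points of gbar and super-invariant ones satisfy gbar(v) \<le> v, so the orbit of v under gbar
  decreases, stays above the fixed point h up to a constant, and converges to a fixed point u.
  A subgradient M of gbar is stochastic, and an M-superharmonic vector is harmonic, indeed
  constant, on every recurrence class of M. Hence the orbit never moves on critical nodes, and
  two fixed points of gbar that agree on the critical nodes coincide, because the minimum of
  their difference is attained on a recurrence class.
\<close>

lemma cvec_nth [simp]: "cvec c $ i = c"
  by (simp add: cvec_def)

lemma scaleR_cvec: "c *\<^sub>R cvec d = cvec (c * d)"
  by (simp add: vec_eq_iff)

lemma le_cvec_plus_iff: "x \<le> cvec c + y \<longleftrightarrow> (\<forall>i. x $ i \<le> c + y $ i)"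
  by (simp add: less_eq_vec_def)

lemma matrix_vector_mult_component: "(A *v x) $ i = (\<Sum>j\<in>UNIV. A $ i $ j * x $ j)"
  by (simp add: matrix_vector_mult_def)

lemma frequently_pigeonhole:
  assumes "finite I" and "\<forall>\<^sub>F x in F. \<exists>i\<in>I. P i x" and "F \<noteq> bot"
  shows "\<exists>i\<in>I. \<exists>\<^sub>F x in F. P i x"
proof (rule ccontr)
  assume "\<not> ?thesis"
  then have "\<forall>\<^sub>F x in F. \<forall>i\<in>I. \<not> P i x"
    using assms(1) by (intro eventually_ball_finite) (auto simp: not_frequently)
  with assms(2) have "\<forall>\<^sub>F x in F. False"
    by eventually_elim blast
  with assms(3) show False
    by (simp add: eventually_False)
qed

lemma convex_halfline_frequently_imp_eventually:
  assumes "convex P" and "\<exists>\<^sub>F t in at_top. t *\<^sub>R \<eta> + v \<in> P"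
  shows "\<forall>\<^sub>F t in at_top. t *\<^sub>R \<eta> + v \<in> P"
proof -
  define S where "S = {t::real. t *\<^sub>R \<eta> + v \<in> P}"
  have "convex S"
  proof (rule convexI)
    fix x y u w :: real
    assume "x \<in> S" "y \<in> S" "0 \<le> u" "0 \<le> w" "u + w = 1"
    moreover have "u *\<^sub>R (x *\<^sub>R \<eta> + v) + w *\<^sub>R (y *\<^sub>R \<eta> + v) = (u * x + w * y) *\<^sub>R \<eta> + (u + w) *\<^sub>R v"
      by (simp add: scaleR_add_right scaleR_add_left scaleR_scaleR)
    ultimately show "u *\<^sub>R x + w *\<^sub>R y \<in> S"
      using convexD[OF assms(1), of "x *\<^sub>R \<eta> + v" "y *\<^sub>R \<eta> + v" u w] by (simp add: S_def)
  qed
  then have interval: "a \<in> S \<Longrightarrow> b \<in> S \<Longrightarrow> a \<le> t \<Longrightarrow> t \<le> b \<Longrightarrow> t \<in> S" for a b t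
    unfolding is_interval_convex_1[symmetric] is_interval_1 by blast
  obtain t0 where "t0 \<in> S"
    using frequently_ex[OF assms(2)] by (auto simp: S_def)
  have "t \<in> S" if "t \<ge> t0" for t
  proof -
    obtain s where "s \<ge> t" "s \<in> S"
      using frequently_ex[OF frequently_eventually_frequently[OF assms(2) eventually_ge_at_top[of t]]]
      by (auto simp: S_def)
    then show ?thesis
      using interval[OF \<open>t0 \<in> S\<close>] that by blast
  qed
  then show ?thesis
    unfolding eventually_at_top_linorder S_def by blast
qed

lemma interior_Union_closed_empty:
  fixes \<A> :: "'a::topological_space set set"
  assumes "finite \<A>" and "\<And>A. A \<in> \<A> \<Longrightarrow> closed A \<and> interior A = {}"
  shows "interior (\<Union>\<A>) = {}"
  using assms
proof (induction \<A> rule: finite_induct)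
  case (insert A \<A>)
  then have "interior (A \<union> \<Union>\<A>) = interior A"
    by (intro interior_closed_Un_empty_interior) auto
  with insert show ?case
    by simp
qed simp

text \<open>The pieces with empty interior have a union with empty interior; on its dense complement f
  agrees with h P for some piece P of nonempty interior, and by continuity so it does everywhere.\<close>

lemma closed_cover_solid_pieces:
  fixes f :: "'a::topological_space \<Rightarrow> 'b::t2_space"
  assumes "finite \<P>" and closed: "\<And>P. P \<in> \<P> \<Longrightarrow> closed P" and cover: "\<Union>\<P> = UNIV"
    and continuous: "continuous_on UNIV f" "\<And>P. P \<in> \<P> \<Longrightarrow> continuous_on UNIV (h P)"
    and agree: "\<And>P x. P \<in> \<P> \<Longrightarrow> x \<in> P \<Longrightarrow> f x = h P x"
  obtains P where "P \<in> \<P>" and "interior P \<noteq> {}" and "f x = h P x"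
proof -
  define L where "L = \<Union>{P\<in>\<P>. interior P = {}}"
  have "interior L = {}"
    unfolding L_def using assms(1) closed by (intro interior_Union_closed_empty) auto
  then have dense: "closure (- L) = UNIV"
    by (simp add: closure_complement)
  define C where "C = (\<Union>P\<in>{P\<in>\<P>. interior P \<noteq> {}}. {x. f x = h P x})"
  have "closed {x. f x = h P x}" if "P \<in> \<P>" for P
    using continuous that by (intro closed_Collect_eq) auto
  then have "closed C"
    unfolding C_def using assms(1) by (intro closed_UN) auto
  moreover have "- L \<subseteq> C"
    using cover agree by (fastforce simp: L_def C_def)
  ultimately have "x \<in> C"
    using dense closure_minimal by blast
  then show ?thesis
    using that unfolding C_def by blast
qed

lemma affine_bounded_at_top_imp_slope_zero:
  fixes a d K :: real
  assumes "\<forall>\<^sub>F t in at_top. \<bar>t * a + d\<bar> \<le> K"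
  shows "a = 0"
proof -
  have "((\<lambda>t. a + d / t) \<longlongrightarrow> a + 0) at_top"
    by (intro tendsto_intros tendsto_divide_0[OF tendsto_const] filterlim_at_top_imp_at_infinity
        filterlim_ident)
  moreover have "\<forall>\<^sub>F t in at_top. a + d / t = (t * a + d) / t"
    using eventually_gt_at_top[of 0] by eventually_elim (simp add: field_simps)
  ultimately have "((\<lambda>t. (t * a + d) / t) \<longlongrightarrow> a) at_top"
    by (simp add: tendsto_cong)
  moreover have "((\<lambda>t. (t * a + d) / t) \<longlongrightarrow> 0) at_top"
  proof (rule Lim_null_comparison)
    show "\<forall>\<^sub>F t in at_top. norm ((t * a + d) / t) \<le> K / t"
      using assms eventually_gt_at_top[of 0]
      by eventually_elim (simp add: abs_divide divide_right_mono)
    show "((\<lambda>t. K / t) \<longlongrightarrow> 0) at_top"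
      by (intro tendsto_divide_0[OF tendsto_const] filterlim_at_top_imp_at_infinity filterlim_ident)
  qed
  ultimately show "a = 0"
    using tendsto_unique trivial_limit_at_top_linorder by blast
qed

lemma affine_frequently_small_imp_zero:
  fixes a d :: real
  assumes small: "\<And>\<epsilon>. \<epsilon> > 0 \<Longrightarrow> \<exists>\<^sub>F t in at_top. \<bar>t * a + d\<bar> \<le> \<epsilon>"
  shows "a = 0" and "d = 0"
proof -
  show "a = 0"
  proof (rule ccontr)
    assume "a \<noteq> 0"
    have large: "\<forall>\<^sub>F t in at_top. \<bar>t * a + d\<bar> > 1"
      using eventually_ge_at_top[of "(\<bar>d\<bar> + 2) / \<bar>a\<bar>"]
    proof eventually_elim
      case (elim t)
      then have "t * \<bar>a\<bar> \<ge> \<bar>d\<bar> + 2"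
        using \<open>a \<noteq> 0\<close> by (simp add: field_simps)
      moreover have "t \<ge> 0"
        using elim by (smt (verit) divide_nonneg_nonneg abs_ge_zero)
      then have "\<bar>t * a\<bar> = t * \<bar>a\<bar>"
        by (simp add: abs_mult)
      ultimately show ?case
        by arith
    qed
    have "\<exists>\<^sub>F t in at_top. \<bar>t * a + d\<bar> \<le> 1"
      using small by simp
    from frequently_eventually_frequently[OF this large] show False
      by (simp add: frequently_def)
  qed
  then have d_small: "\<bar>d\<bar> \<le> \<epsilon>" if "\<epsilon> > 0" for \<epsilon>
    using small[OF that] by simp
  show "d = 0"
  proof (rule ccontr)
    assume "d \<noteq> 0"
    then show False
      using d_small[of "\<bar>d\<bar> / 2"] by simp
  qed
qed

section \<open>Topical maps\<close>

locale topical =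
  fixes g :: "real^'n \<Rightarrow> real^'n"
  assumes order_preserving: "order_preserving g"
    and additively_homogeneous: "additively_homogeneous g"
begin

lemma mono: "x \<le> y \<Longrightarrow> g x \<le> g y"
  using order_preserving by (simp add: order_preserving_def)

lemma add_cvec: "g (cvec c + x) = cvec c + g x"
  using additively_homogeneous by (simp add: additively_homogeneous_def)

lemma sup_norm_nonexpansive:
  assumes "\<forall>j. \<bar>x $ j - y $ j\<bar> \<le> c"
  shows "\<bar>g x $ i - g y $ i\<bar> \<le> c"
proof -
  have "x $ j \<le> c + y $ j \<and> y $ j \<le> c + x $ j" for j
    using assms[rule_format, of j] by (auto simp: abs_le_iff)
  then have "x \<le> cvec c + y" "y \<le> cvec c + x"
    by (simp_all add: le_cvec_plus_iff)
  then have "g x \<le> cvec c + g y" "g y \<le> cvec c + g x"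
    using mono add_cvec by metis+
  then show ?thesis
    by (auto simp: le_cvec_plus_iff abs_le_iff algebra_simps)
qed

lemma component_dist_le_norm: "\<bar>g x $ i - g y $ i\<bar> \<le> norm (x - y)"
  by (rule sup_norm_nonexpansive) (metis component_le_norm_cart vector_minus_component)

lemma lipschitz: "norm (g x - g y) \<le> real CARD('n) * norm (x - y)"
proof -
  have "norm (g x - g y) \<le> (\<Sum>i\<in>UNIV. \<bar>(g x - g y) $ i\<bar>)"
    by (rule norm_le_l1_cart)
  also have "\<dots> \<le> (\<Sum>i\<in>(UNIV::'n set). norm (x - y))"
    by (rule sum_mono) (simp add: component_dist_le_norm)
  finally show ?thesis
    by simp
qed

lemma continuous_on: "continuous_on S g"
  by (rule lipschitz_on_continuous_on[of "real CARD('n)"])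
    (simp add: lipschitz_on_def dist_norm lipschitz)

lemma isCont: "isCont g x"
  using continuous_on[of UNIV] by (simp add: continuous_on_eq_continuous_at)

lemma topical_funpow: "topical (g ^^ k)"
proof (induction k)
  case 0
  show ?case
    by unfold_locales (simp_all add: order_preserving_def additively_homogeneous_def)
next
  case (Suc k)
  then interpret gk: topical "g ^^ k" .
  show ?case
    by unfold_locales (simp_all add: order_preserving_def additively_homogeneous_def
        mono gk.mono add_cvec gk.add_cvec)
qed

lemma discounted_fixpoint:
  assumes "0 \<le> \<beta>" "\<beta> < 1"
  obtains x where "g (\<beta> *\<^sub>R x) = x"
proof -
  define B where "B = norm (g 0)"
  define M where "M = B / (1 - \<beta>)"
  have "M \<ge> 0"
    using assms by (simp add: M_def B_def)
  have BM: "\<beta> * M + B = M"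
    using assms by (simp add: M_def field_simps)
  have g0: "- B \<le> g 0 $ i \<and> g 0 $ i \<le> B" for i
    using component_le_norm_cart[of "g 0" i] by (auto simp: B_def)
  have g_cvec: "g (cvec c) = cvec c + g 0" for c
    using add_cvec[of c 0] by simp
  have maps_to: "g (\<beta> *\<^sub>R x) \<in> {cvec (- M)..cvec M}" if "x \<in> {cvec (- M)..cvec M}" for x
  proof -
    have "cvec (\<beta> * - M) \<le> \<beta> *\<^sub>R x" "\<beta> *\<^sub>R x \<le> cvec (\<beta> * M)"
      using that assms mult_left_mono[of "- M" _ \<beta>] mult_left_mono[of _ M \<beta>]
      by (auto simp: less_eq_vec_def simp del: mult_minus_right)
    then have "g (cvec (\<beta> * - M)) \<le> g (\<beta> *\<^sub>R x)" "g (\<beta> *\<^sub>R x) \<le> g (cvec (\<beta> * M))"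
      by (simp_all add: mono)
    then have bounds: "- (\<beta> * M) + g 0 $ i \<le> g (\<beta> *\<^sub>R x) $ i \<and> g (\<beta> *\<^sub>R x) $ i \<le> \<beta> * M + g 0 $ i" for i
      by (auto simp: g_cvec less_eq_vec_def)
    have "- M \<le> g (\<beta> *\<^sub>R x) $ i \<and> g (\<beta> *\<^sub>R x) $ i \<le> M" for i
      using bounds[of i] g0[of i] BM by linarith
    then show ?thesis
      by (simp add: less_eq_vec_def)
  qed
  have "continuous_on {cvec (- M)..cvec M} (\<lambda>x. g (\<beta> *\<^sub>R x))"
    by (intro continuous_on_compose2[OF continuous_on[of UNIV]] continuous_intros) auto
  moreover have "{cvec (- M)..cvec M} \<noteq> {}"
    using \<open>M \<ge> 0\<close> by (auto simp: less_eq_vec_def)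
  ultimately obtain x where "g (\<beta> *\<^sub>R x) = x"
    using brouwer[of "{cvec (- M)..cvec M}" "\<lambda>x. g (\<beta> *\<^sub>R x)"] maps_to
    by (auto simp: interval_cbox_cart)
  then show ?thesis
    using that by blast
qed

lemma funpow_invariant_halfline:
  assumes inv: "\<forall>t\<ge>T. g (t *\<^sub>R \<eta> + h) = (t + 1) *\<^sub>R \<eta> + h" and "t \<ge> T"
  shows "(g ^^ k) (t *\<^sub>R \<eta> + h) = (t + real k) *\<^sub>R \<eta> + h"
proof (induction k)
  case (Suc k)
  then show ?case
    using inv \<open>t \<ge> T\<close> by (simp add: add.assoc)
qed simp

lemma cycle_time_eqI:
  assumes "invariant_halfline g \<eta> h"
  shows "cycle_time g = \<eta>"
proof -
  obtain T where inv: "\<forall>t\<ge>T. g (t *\<^sub>R \<eta> + h) = (t + 1) *\<^sub>R \<eta> + h"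
    using assms unfolding invariant_halfline_def eventually_at_top_linorder by blast
  define y where "y = T *\<^sub>R \<eta> + h"
  have orbit_y: "(g ^^ k) y = real k *\<^sub>R \<eta> + y" for k
    using funpow_invariant_halfline[OF inv order_refl, of k] by (simp add: y_def algebra_simps)
  have "(\<lambda>k. (1 / real k) *\<^sub>R (g ^^ k) x) \<longlonglongrightarrow> \<eta>" for x
  proof -
    define C where "C = real CARD('n) * norm (x - y) + norm y"
    define w where "w k = (g ^^ k) x - (g ^^ k) y + y" for k
    have "norm (w k) \<le> C" for k
    proof -
      interpret gk: topical "g ^^ k"
        by (rule topical_funpow)
      show ?thesis
        using gk.lipschitz[of x y] norm_triangle_ineq[of "(g ^^ k) x - (g ^^ k) y" y]
        by (simp add: w_def C_def)
    qed
    then have "(\<lambda>k. (1 / real k) *\<^sub>R w k) \<longlonglongrightarrow> 0"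
      by (intro Lim_null_comparison[OF _ lim_const_over_n[of C]] always_eventually)
        (simp add: divide_right_mono)
    then have "(\<lambda>k. \<eta> + (1 / real k) *\<^sub>R w k) \<longlonglongrightarrow> \<eta>"
      using tendsto_add[OF tendsto_const] by fastforce
    moreover have "\<forall>\<^sub>F k in sequentially. \<eta> + (1 / real k) *\<^sub>R w k = (1 / real k) *\<^sub>R (g ^^ k) x"
      using eventually_ge_at_top[of "1::nat"]
      by eventually_elim (simp add: w_def orbit_y scaleR_diff_right)
    ultimately show ?thesis
      by (rule Lim_transform_eventually)
  qed
  then show ?thesis
    unfolding cycle_time_def by (intro the_equality) (blast intro: LIMSEQ_unique)+
qed

lemma orbit_decreasing:
  assumes "g v \<le> v"
  shows "g ((g ^^ k) v) \<le> (g ^^ k) v"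
  by (induction k) (use assms mono in simp_all)

lemma decreasing_orbit_converges:
  assumes "g h = h" and "g v \<le> v"
  obtains u where "(\<lambda>k. (g ^^ k) v) \<longlonglongrightarrow> u" and "g u = u"
proof -
  define y where "y k = (g ^^ k) v" for k
  have dec: "y (Suc k) \<le> y k" for k
    using orbit_decreasing[OF assms(2)] by (simp add: y_def)
  define c where "c = norm (h - v)"
  have "h $ i - v $ i \<le> c" for i
    using component_le_norm_cart[of "h - v" i] by (simp add: c_def)
  then have start: "h \<le> cvec c + v"
    unfolding le_cvec_plus_iff by (simp add: add.commute diff_le_eq)
  have lower: "h \<le> cvec c + y k" for k
  proof (induction k)
    case (Suc k)
    then have "g h \<le> g (cvec c + y k)"
      by (rule mono)
    then show ?case
      using assms(1) by (simp add: add_cvec y_def)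
  qed (simp add: y_def start)
  have "\<exists>L. (\<lambda>k. y k $ i) \<longlonglongrightarrow> L" for i
  proof -
    have "decseq (\<lambda>k. y k $ i)"
      using dec by (intro decseq_SucI) (simp add: less_eq_vec_def)
    moreover have "\<forall>k. h $ i - c \<le> y k $ i"
      using lower by (auto simp: le_cvec_plus_iff algebra_simps)
    ultimately show ?thesis
      by (metis decseq_convergent)
  qed
  then obtain L where "\<forall>i. (\<lambda>k. y k $ i) \<longlonglongrightarrow> L i"
    by metis
  then have lim: "y \<longlonglongrightarrow> (\<chi> i. L i)"
    by (intro vec_tendstoI) simp
  have "(\<lambda>k. g (y k)) \<longlonglongrightarrow> g (\<chi> i. L i)"
    using isCont lim by (rule isCont_tendsto_compose)
  moreover have "(\<lambda>k. g (y k)) \<longlonglongrightarrow> (\<chi> i. L i)"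
    using LIMSEQ_Suc[OF lim] by (simp add: y_def)
  ultimately have "g (\<chi> i. L i) = (\<chi> i. L i)"
    by (rule LIMSEQ_unique)
  then show ?thesis
    using that lim by (simp add: y_def[abs_def])
qed

lemma locally_affine_imp_nonneg:
  assumes "e > 0" and affine: "\<forall>x\<in>ball x0 e. g x = A *v x + b"
  shows "A $ i $ j \<ge> 0"
proof -
  define d where "d = (e / 2) *\<^sub>R axis j (1::real)"
  have "x0 - d \<in> ball x0 e"
    using \<open>e > 0\<close> by (simp add: d_def dist_norm)
  moreover have "x0 - d \<le> x0"
    using \<open>e > 0\<close> by (simp add: d_def less_eq_vec_def axis_def)
  ultimately have "A *v (x0 - d) + b \<le> A *v x0 + b"
    using mono affine \<open>e > 0\<close> by (metis centre_in_ball)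
  then have "0 \<le> (A *v d) $ i"
    by (simp add: matrix_vector_mult_diff_distrib less_eq_vec_def)
  moreover have "(A *v d) $ i = e / 2 * A $ i $ j"
    by (simp add: d_def matrix_vector_mult_scaleR matrix_vector_mult_basis column_def)
  ultimately show ?thesis
    using \<open>e > 0\<close> by (simp add: zero_le_mult_iff)
qed

lemma locally_affine_imp_row_sum:
  assumes "e > 0" and affine: "\<forall>x\<in>ball x0 e. g x = A *v x + b"
  shows "(\<Sum>j\<in>UNIV. A $ i $ j) = 1"
proof -
  define n where "n = norm (cvec 1 :: real^'n)"
  define c where "c = e / (2 * n + 2)"
  have "2 * n + 2 > 0"
    by (simp add: n_def add_nonneg_pos)
  then have "c > 0"
    using \<open>e > 0\<close> by (simp add: c_def)
  have "norm (cvec c :: real^'n) = c * n"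
    using \<open>c > 0\<close> by (simp add: n_def flip: scaleR_cvec[of c 1, simplified])
  also have "\<dots> = e * (n / (2 * n + 2))"
    by (simp add: c_def)
  also have "\<dots> < e * 1"
    using \<open>e > 0\<close> \<open>2 * n + 2 > 0\<close> by (intro mult_strict_left_mono) (simp_all add: n_def)
  finally have "cvec c + x0 \<in> ball x0 e"
    by (simp add: dist_norm)
  then have "A *v (cvec c + x0) + b = cvec c + (A *v x0 + b)"
    using affine add_cvec[of c x0] \<open>e > 0\<close> by (metis centre_in_ball)
  then have "(A *v cvec c) $ i = c"
    by (simp add: matrix_vector_right_distrib vec_eq_iff)
  moreover have "(A *v cvec c) $ i = c * (\<Sum>j\<in>UNIV. A $ i $ j)"
    by (simp add: matrix_vector_mult_component sum_distrib_left mult.commute)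
  ultimately show ?thesis
    using \<open>c > 0\<close> by simp
qed

lemma discounted_fixpoint_near_halfline:
  assumes "t \<ge> 0" and fixpoint: "g ((t / (t + 1)) *\<^sub>R x) = x"
  shows "\<bar>g (t *\<^sub>R \<eta> + h) $ i - ((t + 1) *\<^sub>R \<eta> + h) $ i\<bar>
    \<le> norm h / (t + 1) + 2 * norm (x - (t + 1) *\<^sub>R \<eta> - h)"
proof -
  define \<beta> where "\<beta> = t / (t + 1)"
  define e where "e = x - (t + 1) *\<^sub>R \<eta> - h"
  have \<beta>: "\<beta> * (t + 1) = t" "0 \<le> \<beta>" "\<beta> \<le> 1" "1 - \<beta> = 1 / (t + 1)"
    using assms(1) by (simp_all add: \<beta>_def field_simps)
  have "\<beta> *\<^sub>R x = \<beta> *\<^sub>R e + (\<beta> * (t + 1)) *\<^sub>R \<eta> + \<beta> *\<^sub>R h"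
    by (simp add: e_def algebra_simps)
  then have "\<beta> *\<^sub>R x = \<beta> *\<^sub>R e + t *\<^sub>R \<eta> + \<beta> *\<^sub>R h"
    by (simp only: \<beta>(1))
  then have "t *\<^sub>R \<eta> + h - \<beta> *\<^sub>R x = (1 - \<beta>) *\<^sub>R h - \<beta> *\<^sub>R e"
    by (simp add: algebra_simps)
  moreover have "norm ((1 - \<beta>) *\<^sub>R h - \<beta> *\<^sub>R e) \<le> norm h / (t + 1) + norm e"
    using norm_triangle_ineq4[of "(1 - \<beta>) *\<^sub>R h" "\<beta> *\<^sub>R e"] \<beta> assms(1)
      mult_left_le_one_le[of "norm e" \<beta>] by simp
  ultimately have "\<bar>g (t *\<^sub>R \<eta> + h) $ i - x $ i\<bar> \<le> norm h / (t + 1) + norm e"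
    using component_dist_le_norm[of "t *\<^sub>R \<eta> + h" i "\<beta> *\<^sub>R x"] fixpoint by (simp add: \<beta>_def)
  moreover have "\<bar>x $ i - ((t + 1) *\<^sub>R \<eta> + h) $ i\<bar> \<le> norm e"
    using component_le_norm_cart[of e i] by (simp add: e_def)
  ultimately show ?thesis
    by (simp add: e_def)
qed

end

section \<open>Stochastic matrices and recurrence classes\<close>

lemma reach_refl [simp]: "reach M i i"
  by (simp add: reach_def)

lemma reach_step: "reach M i j \<Longrightarrow> M $ j $ k > 0 \<Longrightarrow> reach M i k"
  unfolding reach_def by (rule rtrancl_into_rtrancl) auto

lemma reach_trans: "reach M i j \<Longrightarrow> reach M j k \<Longrightarrow> reach M i k"
  unfolding reach_def by (rule rtrancl_trans)

lemma reach_induct [consumes 1, case_names base step]: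
  assumes "reach M i j" and "P i"
    and "\<And>a b. reach M i a \<Longrightarrow> P a \<Longrightarrow> M $ a $ b > 0 \<Longrightarrow> P b"
  shows "P j"
  using assms(1) unfolding reach_def
proof (induction rule: rtrancl_induct)
  case (step y z)
  then show ?case
    using assms(3) unfolding reach_def by auto
qed (use assms(2) in simp)

lemma reach_recurrence_class:
  assumes "stochastic M"
  obtains F k where "recurrence_class M F" and "k \<in> F" and "reach M j k"
proof -
  let ?succ = "\<lambda>k. {l. reach M k l}"
  obtain k where k: "reach M j k" and k_min: "\<And>l. reach M j l \<Longrightarrow> card (?succ k) \<le> card (?succ l)"
    using ex_has_least_nat[of "reach M j" j "\<lambda>k. card (?succ k)"] by auto
  have return: "reach M l k" if "reach M k l" for l
  proof -
    have sub: "?succ l \<subseteq> ?succ k"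
      using that reach_trans by blast
    moreover have "card (?succ k) \<le> card (?succ l)"
      using k_min k that reach_trans by blast
    ultimately have "card (?succ l) = card (?succ k)"
      using card_mono[OF finite sub] by linarith
    then have "?succ l = ?succ k"
      using card_subset_eq[OF finite sub] by blast
    then show ?thesis
      by auto
  qed
  define F where "F = {l. reach M k l \<and> reach M l k}"
  have closed: "M $ i $ l = 0" if "i \<in> F" "l \<notin> F" for i l
  proof (rule ccontr)
    assume "M $ i $ l \<noteq> 0"
    then have "M $ i $ l > 0"
      using assms by (simp add: stochastic_def less_le)
    then have "reach M k l"
      using that(1) reach_step by (auto simp: F_def)
    then show False
      using that(2) return by (simp add: F_def)
  qed
  have "(\<Sum>l\<in>F. M $ i $ l) = 1" if "i \<in> F" for i
  proof -
    have "(\<Sum>l\<in>F. M $ i $ l) = (\<Sum>l\<in>UNIV. M $ i $ l)"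
      using closed that by (intro sum.mono_neutral_left) auto
    then show ?thesis
      using assms by (simp add: stochastic_def)
  qed
  then have "recurrence_class M F"
    using closed unfolding recurrence_class_def communication_class_def F_def by blast
  moreover have "k \<in> F"
    by (simp add: F_def)
  ultimately show ?thesis
    using that k by blast
qed

lemma superharmonic_min_spreads:
  assumes M: "stochastic M" and row: "\<forall>j. j \<notin> S \<longrightarrow> M $ k $ j = 0"
    and min: "\<forall>j\<in>S. m \<le> z $ j" and zk: "z $ k = m" and super: "(M *v z) $ k \<le> z $ k"
    and edge: "M $ k $ l > 0"
  shows "l \<in> S \<and> z $ l = m"
proof -
  have l: "l \<in> S"
    using row edge by force
  have nonneg: "\<forall>j\<in>UNIV. M $ k $ j * (z $ j - m) \<ge> 0"
  proof
    fix j
    show "M $ k $ j * (z $ j - m) \<ge> 0"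
      using row min M by (cases "j \<in> S") (auto simp: stochastic_def)
  qed
  have "(\<Sum>j\<in>UNIV. M $ k $ j * (z $ j - m)) = (M *v z) $ k - m * (\<Sum>j\<in>UNIV. M $ k $ j)"
    by (simp add: matrix_vector_mult_component algebra_simps sum_subtractf sum_distrib_left)
  also have "\<dots> = (M *v z) $ k - m"
    using M by (simp add: stochastic_def)
  finally have "(\<Sum>j\<in>UNIV. M $ k $ j * (z $ j - m)) = (M *v z) $ k - m" .
  moreover have "(\<Sum>j\<in>UNIV. M $ k $ j * (z $ j - m)) \<ge> 0"
    using nonneg by (intro sum_nonneg) auto
  ultimately have "(\<Sum>j\<in>UNIV. M $ k $ j * (z $ j - m)) = 0"
    using super zk by linarith
  then have "M $ k $ l * (z $ l - m) = 0"
    using nonneg by (simp add: sum_nonneg_eq_0_iff)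
  then show ?thesis
    using edge l by simp
qed

lemma recurrence_class_superharmonic_imp_harmonic:
  assumes M: "stochastic M" and F: "recurrence_class M F"
    and super: "\<forall>i\<in>F. (M *v z) $ i \<le> z $ i" and "i \<in> F"
  shows "(M *v z) $ i = z $ i"
proof -
  obtain i0 where F_eq: "F = {j. reach M i0 j \<and> reach M j i0}"
    using F unfolding recurrence_class_def communication_class_def by blast
  have closed: "\<forall>i\<in>F. \<forall>j. j \<notin> F \<longrightarrow> M $ i $ j = 0"
    using F unfolding recurrence_class_def by blast
  define m where "m = Min ((\<lambda>j. z $ j) ` F)"
  have min: "\<forall>j\<in>F. m \<le> z $ j"
    by (simp add: m_def)
  have "m \<in> (\<lambda>j. z $ j) ` F"
    unfolding m_def using F_eq by (intro Min_in) auto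
  then obtain j0 where j0: "j0 \<in> F" "z $ j0 = m"
    by auto
  have "k \<in> F \<and> z $ k = m" if "reach M j0 k" for k
    using that
  proof (induction rule: reach_induct)
    case (step a b)
    then show ?case
      using superharmonic_min_spreads[OF M _ min, of a b] closed super by blast
  qed (use j0 in simp)
  then have const: "\<forall>j\<in>F. z $ j = m"
    using j0(1) F_eq reach_trans by blast
  have "(M *v z) $ i = (\<Sum>j\<in>UNIV. M $ i $ j * m)"
    unfolding matrix_vector_mult_component
    by (rule sum.cong) (use const closed \<open>i \<in> F\<close> in auto)
  also have "\<dots> = m"
    using M by (simp add: stochastic_def sum_distrib_right[symmetric])
  finally show ?thesis
    using const \<open>i \<in> F\<close> by simp
qed

lemma superharmonic_min_on_recurrence_class:
  assumes M: "stochastic M" and super: "\<forall>i. (M *v w) $ i \<le> w $ i"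
  obtains F j where "recurrence_class M F" and "j \<in> F" and "\<forall>i. w $ j \<le> w $ i"
proof -
  define m where "m = Min (range (\<lambda>j. w $ j))"
  have min: "\<forall>j\<in>UNIV. m \<le> w $ j"
    by (simp add: m_def)
  have "m \<in> range (\<lambda>j. w $ j)"
    unfolding m_def by (intro Min_in) auto
  then obtain j0 where j0: "w $ j0 = m"
    by auto
  obtain F k where "recurrence_class M F" "k \<in> F" "reach M j0 k"
    using reach_recurrence_class[OF M] by blast
  moreover have "w $ k = m"
    using \<open>reach M j0 k\<close>
  proof (induction rule: reach_induct)
    case (step a b)
    then show ?case
      using superharmonic_min_spreads[OF M _ min, of a b] super by blast
  qed (use j0 in simp)
  ultimately show ?thesis
    using that min by auto
qed

section \<open>Rational functions and discounted linear systems\<close>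

lemma eventually_at_left_1: "\<forall>\<^sub>F \<beta> in at_left (1::real). 0 < \<beta> \<and> \<beta> < 1"
  by (rule eventually_at_leftI[of 0]) auto

lemma bounded_poly_ratio_root_1:
  fixes s q :: "real poly"
  assumes q1: "poly q 1 = 0"
    and bounded: "\<forall>\<^sub>F \<beta> in at_left 1. poly q \<beta> \<noteq> 0 \<and> \<bar>poly s \<beta> / poly q \<beta>\<bar> \<le> K"
  shows "poly s 1 = 0"
proof (rule ccontr)
  assume "poly s 1 \<noteq> 0"
  have "((\<lambda>\<beta>. \<bar>poly s \<beta>\<bar> - \<bar>K\<bar> * \<bar>poly q \<beta>\<bar>) \<longlongrightarrow> \<bar>poly s 1\<bar> - \<bar>K\<bar> * \<bar>poly q 1\<bar>) (at_left 1)"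
    by (intro tendsto_intros)
  then have "\<forall>\<^sub>F \<beta> in at_left 1. \<bar>poly s \<beta>\<bar> - \<bar>K\<bar> * \<bar>poly q \<beta>\<bar> > 0"
    using q1 \<open>poly s 1 \<noteq> 0\<close> by (intro order_tendstoD(1)) auto
  with bounded have "\<forall>\<^sub>F \<beta> in at_left (1::real). False"
  proof eventually_elim
    case (elim \<beta>)
    then have "poly q \<beta> \<noteq> 0" "\<bar>poly s \<beta> / poly q \<beta>\<bar> \<le> K"
      by auto
    then have "\<bar>poly s \<beta>\<bar> \<le> K * \<bar>poly q \<beta>\<bar>"
      by (simp add: abs_divide pos_divide_le_eq)
    moreover have "K * \<bar>poly q \<beta>\<bar> \<le> \<bar>K\<bar> * \<bar>poly q \<beta>\<bar>"
      by (intro mult_right_mono) auto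
    ultimately show False
      using elim by linarith
  qed
  then show False
    by (simp add: eventually_False)
qed

lemma bounded_poly_ratio_cancel_root_1:
  fixes s q :: "real poly"
  assumes "\<forall>\<^sub>F \<beta> in at_left 1. poly q \<beta> \<noteq> 0 \<and> \<bar>poly s \<beta> / poly q \<beta>\<bar> \<le> K"
  shows "\<exists>S Q. poly Q 1 \<noteq> 0 \<and> (\<forall>\<^sub>F \<beta> in at_left 1. poly s \<beta> / poly q \<beta> = poly S \<beta> / poly Q \<beta>)"
  using assms
proof (induction "degree q" arbitrary: s q rule: less_induct)
  case less
  show ?case
  proof (cases "poly q 1 = 0")
    case True
    obtain q' where q: "q = [:-1, 1:] * q'"
      using True poly_eq_0_iff_dvd[of q 1] by (auto elim: dvdE)
    obtain s' where s: "s = [:-1, 1:] * s'"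
      using bounded_poly_ratio_root_1[OF True less.prems] poly_eq_0_iff_dvd[of s 1]
      by (auto elim: dvdE)
    have "q' \<noteq> 0"
    proof
      assume "q' = 0"
      then have "\<forall>\<^sub>F \<beta> in at_left (1::real). False"
        using less.prems by (simp add: q)
      then show False
        by (simp add: eventually_False)
    qed
    then have "degree q = degree [:-1, 1::real:] + degree q'"
      unfolding q by (intro degree_mult_eq) auto
    then have deg: "degree q' < degree q"
      by simp
    have poly_s: "poly s \<beta> = (\<beta> - 1) * poly s' \<beta>" and poly_q: "poly q \<beta> = (\<beta> - 1) * poly q' \<beta>"
      for \<beta>
      by (simp_all add: s q algebra_simps)
    have same_ratio: "\<forall>\<^sub>F \<beta> in at_left 1. poly s \<beta> / poly q \<beta> = poly s' \<beta> / poly q' \<beta>"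
      using eventually_at_left_1 by eventually_elim (simp add: poly_s poly_q)
    have "\<forall>\<^sub>F \<beta> in at_left 1. poly q' \<beta> \<noteq> 0 \<and> \<bar>poly s' \<beta> / poly q' \<beta>\<bar> \<le> K"
      using less.prems same_ratio
    proof eventually_elim
      case (elim \<beta>)
      then show ?case
        using poly_q[of \<beta>] by (metis mult_zero_right)
    qed
    then obtain S Q where "poly Q 1 \<noteq> 0"
      and S_Q: "\<forall>\<^sub>F \<beta> in at_left 1. poly s' \<beta> / poly q' \<beta> = poly S \<beta> / poly Q \<beta>"
      using less.hyps[OF deg] by blast
    moreover have "\<forall>\<^sub>F \<beta> in at_left 1. poly s \<beta> / poly q \<beta> = poly S \<beta> / poly Q \<beta>"
      using same_ratio S_Q by eventually_elim simp
    ultimately show ?thesis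
      by blast
  qed (rule exI[of _ s], rule exI[of _ q], simp)
qed

lemma poly_ratio_laurent_at_left_1:
  fixes p q :: "real poly"
  assumes "\<forall>\<^sub>F \<beta> in at_left 1. poly q \<beta> \<noteq> 0 \<and> (1 - \<beta>) * \<bar>poly p \<beta> / poly q \<beta>\<bar> \<le> K"
  obtains c h where "((\<lambda>\<beta>. poly p \<beta> / poly q \<beta> - c / (1 - \<beta>)) \<longlongrightarrow> h) (at_left 1)"
proof -
  define s where "s = [:1, -1:] * p"
  have s: "poly s \<beta> = (1 - \<beta>) * poly p \<beta>" for \<beta>
    by (simp add: s_def algebra_simps)
  have "\<forall>\<^sub>F \<beta> in at_left 1. poly q \<beta> \<noteq> 0 \<and> \<bar>poly s \<beta> / poly q \<beta>\<bar> \<le> K"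
    using assms eventually_at_left_1 by eventually_elim (simp add: s abs_mult abs_divide)
  then obtain S Q where Q1: "poly Q 1 \<noteq> 0"
    and ratio: "\<forall>\<^sub>F \<beta> in at_left 1. poly s \<beta> / poly q \<beta> = poly S \<beta> / poly Q \<beta>"
    using bounded_poly_ratio_cancel_root_1 by blast
  define f where "f \<beta> = poly S \<beta> / poly Q \<beta>" for \<beta>
  obtain D where "(f has_field_derivative D) (at 1)"
    using DERIV_divide[OF poly_DERIV poly_DERIV Q1] unfolding f_def by blast
  then have "((\<lambda>\<beta>. (f \<beta> - f 1) / (\<beta> - 1)) \<longlongrightarrow> D) (at_left 1)"
    using has_field_derivative_at_within has_field_derivative_iff by blast
  then have "((\<lambda>\<beta>. - ((f \<beta> - f 1) / (\<beta> - 1))) \<longlongrightarrow> - D) (at_left 1)"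
    by (rule tendsto_minus)
  moreover have "\<forall>\<^sub>F \<beta> in at_left 1.
      - ((f \<beta> - f 1) / (\<beta> - 1)) = poly p \<beta> / poly q \<beta> - f 1 / (1 - \<beta>)"
    using ratio eventually_at_left_1 assms
  proof eventually_elim
    case (elim \<beta>)
    then have f: "f \<beta> = (1 - \<beta>) * (poly p \<beta> / poly q \<beta>)"
      by (simp add: f_def s)
    have "- ((f \<beta> - f 1) / (\<beta> - 1)) = (f \<beta> - f 1) / (1 - \<beta>)"
      by (metis divide_minus_right minus_diff_eq)
    also have "\<dots> = poly p \<beta> / poly q \<beta> - f 1 / (1 - \<beta>)"
      using elim by (simp add: f diff_divide_distrib)
    finally show ?case .
  qed
  ultimately show ?thesis
    using that by (auto dest: tendsto_cong[THEN iffD1])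
qed

lemma matrix_inv_solves:
  fixes M :: "'a::field^'n^'n"
  assumes "invertible M"
  shows "M *v (matrix_inv M *v b) = b"
proof -
  have "M ** matrix_inv M = mat 1"
    using someI_ex[OF assms[unfolded invertible_def]] by (simp add: matrix_inv_def)
  then show ?thesis
    by (simp add: matrix_vector_mul_assoc)
qed

lemma det_affine_family_poly:
  fixes M :: "real \<Rightarrow> real^'n^'n"
  assumes "\<And>\<beta> i j. M \<beta> $ i $ j = a i j + \<beta> * c i j"
  shows "\<exists>p. \<forall>\<beta>. det (M \<beta>) = poly p \<beta>"
proof (intro exI allI)
  show "det (M \<beta>) = poly (\<Sum>\<pi>\<in>{\<pi>. \<pi> permutes (UNIV::'n set)}.
      smult (of_int (sign \<pi>)) (\<Prod>i\<in>UNIV. [:a i (\<pi> i), c i (\<pi> i):])) \<beta>" for \<beta>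
    unfolding det_def by (simp add: poly_sum poly_prod assms)
qed

lemma mat_1_minus_scaleR_mult:
  fixes A :: "real^'n^'n"
  shows "(mat 1 - \<beta> *\<^sub>R A) *v x = x - \<beta> *\<^sub>R (A *v x)"
  by (simp add: matrix_vector_mult_diff_rdistrib scaleR_matrix_vector_assoc)

lemma stochastic_mult_bound:
  assumes "stochastic A" and "\<forall>j. \<bar>z $ j\<bar> \<le> m"
  shows "\<bar>(A *v z) $ i\<bar> \<le> m"
proof -
  have "\<bar>(A *v z) $ i\<bar> \<le> (\<Sum>j\<in>UNIV. \<bar>A $ i $ j * z $ j\<bar>)"
    unfolding matrix_vector_mult_component by (rule sum_abs)
  also have "\<dots> \<le> (\<Sum>j\<in>UNIV. A $ i $ j * m)"
    using assms by (intro sum_mono) (simp add: abs_mult stochastic_def mult_left_mono)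
  also have "\<dots> = m"
    using assms(1) by (simp add: stochastic_def sum_distrib_right[symmetric])
  finally show ?thesis .
qed

lemma stochastic_discounted_solution_bound:
  assumes A: "stochastic A" and "0 \<le> \<beta>" "\<beta> < 1" and x: "(mat 1 - \<beta> *\<^sub>R A) *v x = b"
  shows "(1 - \<beta>) * \<bar>x $ k\<bar> \<le> norm b"
proof -
  define m where "m = Max (range (\<lambda>j. \<bar>x $ j\<bar>))"
  have le_m: "\<forall>j. \<bar>x $ j\<bar> \<le> m"
    by (simp add: m_def)
  have "m \<in> range (\<lambda>j. \<bar>x $ j\<bar>)"
    unfolding m_def by (intro Max_in) auto
  then obtain j where j: "\<bar>x $ j\<bar> = m"
    by auto
  have "x $ j = b $ j + \<beta> * (A *v x) $ j"
    using arg_cong[OF x, of "\<lambda>y. y $ j"] by (simp add: mat_1_minus_scaleR_mult)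
  moreover have "\<bar>\<beta> * (A *v x) $ j\<bar> \<le> \<beta> * m"
    using stochastic_mult_bound[OF A le_m] \<open>0 \<le> \<beta>\<close> by (simp add: abs_mult mult_left_mono)
  moreover have "\<bar>b $ j\<bar> \<le> norm b"
    by (rule component_le_norm_cart)
  ultimately have "m \<le> norm b + \<beta> * m"
    using j by linarith
  then have "(1 - \<beta>) * m \<le> norm b"
    by (simp add: algebra_simps)
  moreover have "(1 - \<beta>) * \<bar>x $ k\<bar> \<le> (1 - \<beta>) * m"
    using le_m \<open>\<beta> < 1\<close> by (intro mult_left_mono) auto
  ultimately show ?thesis
    by linarith
qed

lemma stochastic_discounted_invertible:
  assumes "stochastic A" and "0 \<le> \<beta>" "\<beta> < 1"
  shows "invertible (mat 1 - \<beta> *\<^sub>R A)"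
proof -
  have "inj ((*v) (mat 1 - \<beta> *\<^sub>R A))"
  proof (rule injI)
    fix x y
    assume "(mat 1 - \<beta> *\<^sub>R A) *v x = (mat 1 - \<beta> *\<^sub>R A) *v y"
    then have "(mat 1 - \<beta> *\<^sub>R A) *v (x - y) = 0"
      by (simp add: matrix_vector_mult_diff_distrib)
    then have "(1 - \<beta>) * \<bar>(x - y) $ k\<bar> \<le> 0" for k
      using stochastic_discounted_solution_bound[OF assms] by fastforce
    then show "x = y"
      using \<open>\<beta> < 1\<close> by (simp add: vec_eq_iff mult_le_0_iff)
  qed
  then show ?thesis
    using det_nz_iff_inj[of "(*v) (mat 1 - \<beta> *\<^sub>R A)"] by (simp add: invertible_det_nz)
qed

definition discounted_solution :: "real^'n^'n \<Rightarrow> real^'n \<Rightarrow> real \<Rightarrow> real^'n" where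
  "discounted_solution A b \<beta> = matrix_inv (mat 1 - \<beta> *\<^sub>R A) *v b"

lemma stochastic_discounted_solution:
  assumes "stochastic A" and "0 \<le> \<beta>" "\<beta> < 1"
  shows "(mat 1 - \<beta> *\<^sub>R A) *v discounted_solution A b \<beta> = b"
  using matrix_inv_solves[OF stochastic_discounted_invertible[OF assms]]
  by (simp add: discounted_solution_def)

lemma stochastic_discounted_solution_unique:
  assumes "stochastic A" and "0 \<le> \<beta>" "\<beta> < 1" and "(mat 1 - \<beta> *\<^sub>R A) *v x = b"
  shows "x = discounted_solution A b \<beta>"
  using assms(4) stochastic_discounted_solution[OF assms(1-3), of b]
    inj_matrix_vector_mult[OF stochastic_discounted_invertible[OF assms(1-3)]]
  by (metis injD)

lemma discounted_solution_component_rational: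
  fixes A :: "real^'n^'n"
  assumes A: "stochastic A"
  obtains p q where
    "\<forall>\<^sub>F \<beta> in at_left 1. poly q \<beta> \<noteq> 0 \<and> discounted_solution A b \<beta> $ k = poly p \<beta> / poly q \<beta>"
proof -
  have "\<exists>q. \<forall>\<beta>. det (mat 1 - \<beta> *\<^sub>R A) = poly q \<beta>"
    by (rule det_affine_family_poly[where a = "\<lambda>i j. if i = j then 1 else 0" and c = "\<lambda>i j. - A $ i $ j"])
      (simp add: mat_def)
  then obtain q where q: "\<And>\<beta>. det (mat 1 - \<beta> *\<^sub>R A) = poly q \<beta>"
    by blast
  have "\<exists>p. \<forall>\<beta>. det (\<chi> i j. if j = k then b $ i else (mat 1 - \<beta> *\<^sub>R A) $ i $ j) = poly p \<beta>"
    by (rule det_affine_family_poly[where a = "\<lambda>i j. if j = k then b $ i else if i = j then 1 else 0"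
          and c = "\<lambda>i j. if j = k then 0 else - A $ i $ j"]) (simp add: mat_def)
  then obtain p where p:
    "\<And>\<beta>. det (\<chi> i j. if j = k then b $ i else (mat 1 - \<beta> *\<^sub>R A) $ i $ j) = poly p \<beta>"
    by blast
  have "\<forall>\<^sub>F \<beta> in at_left 1. poly q \<beta> \<noteq> 0 \<and> discounted_solution A b \<beta> $ k = poly p \<beta> / poly q \<beta>"
    using eventually_at_left_1
  proof eventually_elim
    case (elim \<beta>)
    then have "det (mat 1 - \<beta> *\<^sub>R A) \<noteq> 0" and "(mat 1 - \<beta> *\<^sub>R A) *v discounted_solution A b \<beta> = b"
      using stochastic_discounted_invertible[OF A] stochastic_discounted_solution[OF A]
      by (simp_all add: invertible_det_nz)
    then show ?case
      using cramer[of "mat 1 - \<beta> *\<^sub>R A" "discounted_solution A b \<beta>" b] by (simp add: p q)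
  qed
  then show ?thesis
    using that by blast
qed

text \<open>A rational function of growth at most $1/(1 - \beta)$ has at most a simple pole at
  $\beta = 1$.\<close>

lemma stochastic_discounted_solution_laurent:
  fixes A :: "real^'n^'n"
  assumes A: "stochastic A"
  obtains c h where
    "((\<lambda>\<beta>. discounted_solution A b \<beta> - (1 / (1 - \<beta>)) *\<^sub>R c) \<longlongrightarrow> h) (at_left 1)"
proof -
  define X where "X = discounted_solution A b"
  have "\<exists>c h. ((\<lambda>\<beta>. X \<beta> $ k - c / (1 - \<beta>)) \<longlongrightarrow> h) (at_left 1)" for k
  proof -
    obtain p q where rational:
      "\<forall>\<^sub>F \<beta> in at_left 1. poly q \<beta> \<noteq> 0 \<and> X \<beta> $ k = poly p \<beta> / poly q \<beta>"
      unfolding X_def by (rule discounted_solution_component_rational[OF A])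
    moreover have "\<forall>\<^sub>F \<beta> in at_left 1. (1 - \<beta>) * \<bar>X \<beta> $ k\<bar> \<le> norm b"
      using eventually_at_left_1
    proof eventually_elim
      case (elim \<beta>)
      then show ?case
        using stochastic_discounted_solution_bound[OF A, of \<beta> "X \<beta>" b k]
          stochastic_discounted_solution[OF A] by (simp add: X_def)
    qed
    ultimately have "\<forall>\<^sub>F \<beta> in at_left 1. poly q \<beta> \<noteq> 0 \<and> (1 - \<beta>) * \<bar>poly p \<beta> / poly q \<beta>\<bar> \<le> norm b"
      by eventually_elim simp
    then obtain c h where "((\<lambda>\<beta>. poly p \<beta> / poly q \<beta> - c / (1 - \<beta>)) \<longlongrightarrow> h) (at_left 1)"
      by (rule poly_ratio_laurent_at_left_1)
    moreover have "\<forall>\<^sub>F \<beta> in at_left 1. poly p \<beta> / poly q \<beta> - c / (1 - \<beta>) = X \<beta> $ k - c / (1 - \<beta>)"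
      using rational by eventually_elim simp
    ultimately show ?thesis
      by (blast intro: Lim_transform_eventually)
  qed
  then obtain c h where "\<forall>k. ((\<lambda>\<beta>. X \<beta> $ k - c k / (1 - \<beta>)) \<longlongrightarrow> h k) (at_left 1)"
    by metis
  then have "((\<lambda>\<beta>. X \<beta> - (1 / (1 - \<beta>)) *\<^sub>R (\<chi> k. c k)) \<longlongrightarrow> (\<chi> k. h k)) (at_left 1)"
    by (intro vec_tendstoI) simp
  then show ?thesis
    using that by (simp add: X_def)
qed

lemma stochastic_discounted_solution_along_halfline:
  fixes A :: "real^'n^'n"
  assumes "stochastic A"
  obtains \<eta> h where "((\<lambda>t. discounted_solution A b (t / (t + 1)) - (t + 1) *\<^sub>R \<eta> - h) \<longlongrightarrow> 0) at_top"
proof -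
  obtain \<eta> h where "((\<lambda>\<beta>. discounted_solution A b \<beta> - (1 / (1 - \<beta>)) *\<^sub>R \<eta>) \<longlongrightarrow> h) (at_left 1)"
    by (rule stochastic_discounted_solution_laurent[OF assms])
  moreover have "filterlim (\<lambda>t::real. t / (t + 1)) (at_left 1) at_top"
  proof (rule tendsto_imp_filterlim_at_left)
    show "((\<lambda>t::real. t / (t + 1)) \<longlongrightarrow> 1) at_top"
      by real_asymp
    show "\<forall>\<^sub>F t in at_top. t / (t + 1) < (1::real)"
      using eventually_ge_at_top[of 0] by eventually_elim simp
  qed
  ultimately have "((\<lambda>t. discounted_solution A b (t / (t + 1)) - (1 / (1 - t / (t + 1))) *\<^sub>R \<eta>)
      \<longlongrightarrow> h) at_top"
    by (rule filterlim_compose)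
  moreover have "\<forall>\<^sub>F t in at_top.
      discounted_solution A b (t / (t + 1)) - (1 / (1 - t / (t + 1))) *\<^sub>R \<eta>
      = discounted_solution A b (t / (t + 1)) - (t + 1) *\<^sub>R \<eta>"
    using eventually_ge_at_top[of 0] by eventually_elim (simp add: field_simps)
  ultimately have "((\<lambda>t. discounted_solution A b (t / (t + 1)) - (t + 1) *\<^sub>R \<eta>) \<longlongrightarrow> h) at_top"
    by (rule Lim_transform_eventually)
  then have "((\<lambda>t. discounted_solution A b (t / (t + 1)) - (t + 1) *\<^sub>R \<eta> - h) \<longlongrightarrow> 0) at_top"
    by (simp add: Lim_null[symmetric])
  then show ?thesis
    using that by blast
qed

section \<open>Polyhedral convex topical maps\<close>

locale polyhedral_convex_topical = topical g for g :: "real^'n \<Rightarrow> real^'n" +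
  assumes polyhedral: "polyhedral_map g" and convex: "coord_convex g"
begin

lemma eventually_affine_on_halfline:
  obtains a c where "\<forall>\<^sub>F t in at_top. g (t *\<^sub>R \<eta> + v) = t *\<^sub>R a + c"
proof -
  obtain \<P> where \<P>: "finite \<P>" "\<And>P. P \<in> \<P> \<Longrightarrow> polyhedron P \<and> affine_on_set g P" "\<Union>\<P> = UNIV"
    using polyhedral unfolding polyhedral_map_def by blast
  have "\<forall>\<^sub>F t in at_top. \<exists>P\<in>\<P>. t *\<^sub>R \<eta> + v \<in> P"
    using \<P>(3) by (intro always_eventually) blast
  from frequently_pigeonhole[OF \<P>(1) this trivial_limit_at_top_linorder]
  obtain P where "P \<in> \<P>" and "\<exists>\<^sub>F t in at_top. t *\<^sub>R \<eta> + v \<in> P"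
    by blast
  then have on_P: "\<forall>\<^sub>F t in at_top. t *\<^sub>R \<eta> + v \<in> P"
    using \<P>(2) polyhedron_imp_convex by (blast intro: convex_halfline_frequently_imp_eventually)
  obtain A b where affine: "\<forall>x\<in>P. g x = A *v x + b"
    using \<P>(2)[OF \<open>P \<in> \<P>\<close>] unfolding affine_on_set_def by blast
  have "\<forall>\<^sub>F t in at_top. g (t *\<^sub>R \<eta> + v) = t *\<^sub>R (A *v \<eta>) + (A *v v + b)"
    using on_P by eventually_elim
      (simp add: affine matrix_vector_right_distrib matrix_vector_mult_scaleR)
  then show ?thesis
    using that by blast
qed

lemma halfline_expansion:
  "\<forall>\<^sub>F t in at_top. g (t *\<^sub>R \<eta> + v) = t *\<^sub>R recession g \<eta> + tangent_at_infinity g \<eta> v"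
proof -
  obtain a0 c0 where ray: "\<forall>\<^sub>F t in at_top. g (t *\<^sub>R \<eta> + 0) = t *\<^sub>R a0 + c0"
    by (rule eventually_affine_on_halfline)
  obtain a c where shifted: "\<forall>\<^sub>F t in at_top. g (t *\<^sub>R \<eta> + v) = t *\<^sub>R a + c"
    by (rule eventually_affine_on_halfline)
  have "a $ i = a0 $ i" for i
  proof -
    have "\<forall>\<^sub>F t in at_top. \<bar>t * (a $ i - a0 $ i) + (c $ i - c0 $ i)\<bar> \<le> norm v"
      using ray shifted
    proof eventually_elim
      case (elim t)
      then show ?case
        using component_dist_le_norm[of "t *\<^sub>R \<eta> + v" i "t *\<^sub>R \<eta> + 0"]
        by (simp add: algebra_simps)
    qed
    then show ?thesis
      using affine_bounded_at_top_imp_slope_zero by fastforce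
  qed
  then have "a = a0"
    by (simp add: vec_eq_iff)
  have "((\<lambda>t. a0 + (1 / t) *\<^sub>R c0) \<longlongrightarrow> a0 + 0 *\<^sub>R c0) at_top"
    by (intro tendsto_intros tendsto_divide_0[OF tendsto_const]
        filterlim_at_top_imp_at_infinity filterlim_ident)
  moreover have "\<forall>\<^sub>F t in at_top. a0 + (1 / t) *\<^sub>R c0 = (1 / t) *\<^sub>R g (t *\<^sub>R \<eta>)"
    using ray eventually_gt_at_top[of 0] by eventually_elim (simp add: scaleR_add_right)
  ultimately have "recession g \<eta> = a0"
    unfolding recession_def by (intro tendsto_Lim) (auto dest: tendsto_cong[THEN iffD1])
  moreover have "tangent_at_infinity g \<eta> v = c"
    unfolding tangent_at_infinity_def
  proof (intro tendsto_Lim)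
    show "((\<lambda>t. g (t *\<^sub>R \<eta> + v) - t *\<^sub>R recession g \<eta>) \<longlongrightarrow> c) at_top"
      using shifted \<open>recession g \<eta> = a0\<close> \<open>a = a0\<close>
      by (intro tendsto_eventually) (auto elim: eventually_mono)
  qed simp
  ultimately show ?thesis
    using shifted \<open>a = a0\<close> by simp
qed

lemma locally_affine_imp_minorant:
  assumes "e > 0" and affine: "\<forall>x\<in>ball x0 e. g x = A *v x + b"
  shows "A *v y + b \<le> g y"
  unfolding less_eq_vec_def
proof
  fix i
  define N where "N = norm (y - x0)"
  define s where "s = e / (2 * (N + e))"
  have "N \<ge> 0" and den: "2 * (N + e) > 0"
    using \<open>e > 0\<close> by (simp_all add: N_def add_nonneg_pos)
  have "s * N = e * (N / (2 * (N + e)))"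
    by (simp add: s_def)
  also have "\<dots> < e * 1"
    using \<open>e > 0\<close> den \<open>N \<ge> 0\<close> by (intro mult_strict_left_mono) simp_all
  finally have s: "0 < s" "s \<le> 1" "s * norm (y - x0) < e"
    using \<open>e > 0\<close> den by (simp_all add: s_def N_def pos_divide_le_eq)
  define z where "z = (1 - s) *\<^sub>R x0 + s *\<^sub>R y"
  have "z - x0 = s *\<^sub>R (y - x0)"
    by (simp add: z_def algebra_simps)
  have "dist x0 z = norm (z - x0)"
    by (simp add: dist_norm norm_minus_commute)
  also have "\<dots> = s * norm (y - x0)"
    using \<open>z - x0 = s *\<^sub>R (y - x0)\<close> s by simp
  finally have "z \<in> ball x0 e"
    using s by simp
  have "g z $ i \<le> (1 - s) * g x0 $ i + s * g y $ i"
    using convex_onD[OF convex[unfolded coord_convex_def, rule_format, of i], of s x0 y] s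
    by (simp add: z_def)
  moreover have "g z $ i = (1 - s) * (A *v x0 + b) $ i + s * (A *v y + b) $ i"
    using affine \<open>z \<in> ball x0 e\<close>
    by (simp add: z_def matrix_vector_right_distrib matrix_vector_mult_scaleR algebra_simps)
  moreover have "g x0 $ i = (A *v x0 + b) $ i"
    using affine \<open>e > 0\<close> by simp
  ultimately have "s * (A *v y + b) $ i \<le> s * g y $ i"
    by simp
  then show "(A *v y + b) $ i \<le> g y $ i"
    using s by simp
qed

lemma finite_stochastic_minorants:
  obtains R where "finite R"
    and "\<And>A b. (A, b) \<in> R \<Longrightarrow> stochastic A \<and> (\<forall>y. A *v y + b \<le> g y)"
    and "\<And>x. \<exists>(A, b)\<in>R. g x = A *v x + b"
proof -
  obtain \<P> where \<P>: "finite \<P>" "\<And>P. P \<in> \<P> \<Longrightarrow> polyhedron P \<and> affine_on_set g P" "\<Union>\<P> = UNIV"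
    using polyhedral unfolding polyhedral_map_def by blast
  have "\<forall>P\<in>\<P>. \<exists>Ab. \<forall>x\<in>P. g x = fst Ab *v x + snd Ab"
    using \<P>(2) unfolding affine_on_set_def by fastforce
  then obtain law where law: "\<And>P x. P \<in> \<P> \<Longrightarrow> x \<in> P \<Longrightarrow> g x = fst (law P) *v x + snd (law P)"
    by (metis bchoice)
  define \<Q> where "\<Q> = {P\<in>\<P>. interior P \<noteq> {}}"
  have minorant: "stochastic (fst (law P)) \<and> (\<forall>y. fst (law P) *v y + snd (law P) \<le> g y)"
    if PQ: "P \<in> \<Q>" for P
  proof -
    obtain x0 where "x0 \<in> interior P"
      using PQ unfolding \<Q>_def by blast
    then obtain e where "e > 0" "ball x0 e \<subseteq> P"
      using mem_interior by blast
    then have "\<forall>x\<in>ball x0 e. g x = fst (law P) *v x + snd (law P)"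
      using law PQ by (auto simp: \<Q>_def)
    then show ?thesis
      using \<open>e > 0\<close> locally_affine_imp_nonneg locally_affine_imp_row_sum locally_affine_imp_minorant
      by (simp add: stochastic_def)
  qed
  have "\<exists>(A, b)\<in>law ` \<Q>. g x = A *v x + b" for x
  proof -
    obtain P where "P \<in> \<P>" "interior P \<noteq> {}" "g x = fst (law P) *v x + snd (law P)"
      by (rule closed_cover_solid_pieces[of \<P> g "\<lambda>P x. fst (law P) *v x + snd (law P)"])
        (use \<P> law in \<open>auto intro: polyhedron_imp_closed continuous_on continuous_intros\<close>)
    then show ?thesis
      by (intro bexI[of _ "law P"]) (auto simp: \<Q>_def case_prod_beta)
  qed
  moreover have "finite (law ` \<Q>)"
    using \<P>(1) by (simp add: \<Q>_def)
  moreover have "stochastic A \<and> (\<forall>y. A *v y + b \<le> g y)" if Ab: "(A, b) \<in> law ` \<Q>" for A b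
  proof -
    obtain P where "P \<in> \<Q>" "law P = (A, b)"
      using Ab by (metis imageE)
    then show ?thesis
      using minorant[of P] by simp
  qed
  ultimately show ?thesis
    using that by blast
qed

lemma discounted_fixpoints_frequently_on_one_piece:
  obtains A b where "stochastic A"
    and "\<exists>\<^sub>F t in at_top. g ((t / (t + 1)) *\<^sub>R discounted_solution A b (t / (t + 1)))
      = discounted_solution A b (t / (t + 1))"
proof -
  obtain R where "finite R"
    and minorant: "\<And>A b. (A, b) \<in> R \<Longrightarrow> stochastic A \<and> (\<forall>y. A *v y + b \<le> g y)"
    and cover: "\<And>x. \<exists>(A, b)\<in>R. g x = A *v x + b"
    using finite_stochastic_minorants by blast
  have "\<forall>\<^sub>F t in at_top. \<exists>(A, b)\<in>R. g ((t / (t + 1)) *\<^sub>R discounted_solution A b (t / (t + 1)))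
      = discounted_solution A b (t / (t + 1))"
    using eventually_ge_at_top[of 0]
  proof eventually_elim
    case (elim t)
    define \<beta> where "\<beta> = t / (t + 1)"
    have "0 \<le> \<beta>" "\<beta> < 1"
      using elim by (simp_all add: \<beta>_def)
    then obtain x where x: "g (\<beta> *\<^sub>R x) = x"
      by (rule discounted_fixpoint)
    obtain A b where "(A, b) \<in> R" and "g (\<beta> *\<^sub>R x) = A *v (\<beta> *\<^sub>R x) + b"
      using cover by blast
    then have "x = \<beta> *\<^sub>R (A *v x) + b"
      using x by (simp add: matrix_vector_mult_scaleR)
    then have "(mat 1 - \<beta> *\<^sub>R A) *v x = b"
      by (metis mat_1_minus_scaleR_mult add_diff_cancel_left')
    then have "x = discounted_solution A b \<beta>"
      using minorant[OF \<open>(A, b) \<in> R\<close>] \<open>0 \<le> \<beta>\<close> \<open>\<beta> < 1\<close>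
      by (blast intro: stochastic_discounted_solution_unique)
    then show ?case
      using \<open>(A, b) \<in> R\<close> x unfolding \<beta>_def by blast
  qed
  from frequently_pigeonhole[OF \<open>finite R\<close> this trivial_limit_at_top_linorder]
  obtain A b where "(A, b) \<in> R"
    and "\<exists>\<^sub>F t in at_top. g ((t / (t + 1)) *\<^sub>R discounted_solution A b (t / (t + 1)))
      = discounted_solution A b (t / (t + 1))"
    by auto
  then show ?thesis
    using that minorant by blast
qed

lemma frequently_almost_invariant_imp_invariant:
  assumes almost: "\<And>\<epsilon> i. \<epsilon> > 0 \<Longrightarrow>
    \<exists>\<^sub>F t in at_top. \<bar>g (t *\<^sub>R \<eta> + h) $ i - ((t + 1) *\<^sub>R \<eta> + h) $ i\<bar> \<le> \<epsilon>"
  shows "invariant_halfline g \<eta> h"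
proof -
  obtain a c where affine: "\<forall>\<^sub>F t in at_top. g (t *\<^sub>R \<eta> + h) = t *\<^sub>R a + c"
    by (rule eventually_affine_on_halfline)
  have "a $ i = \<eta> $ i \<and> c $ i = \<eta> $ i + h $ i" for i
  proof -
    have "\<exists>\<^sub>F t in at_top. \<bar>t * (a $ i - \<eta> $ i) + (c $ i - \<eta> $ i - h $ i)\<bar> \<le> \<epsilon>"
      if "\<epsilon> > 0" for \<epsilon>
      using frequently_eventually_frequently[OF almost[OF that, of i] affine]
      by (rule frequently_elim1) (auto simp: algebra_simps)
    from affine_frequently_small_imp_zero[OF this] show ?thesis
      by simp
  qed
  then have "a = \<eta>" and "c = \<eta> + h"
    by (simp_all add: vec_eq_iff)
  have "\<forall>\<^sub>F t in at_top. g (t *\<^sub>R \<eta> + h) = (t + 1) *\<^sub>R \<eta> + h"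
    using affine by eventually_elim (simp add: \<open>a = \<eta>\<close> \<open>c = \<eta> + h\<close> scaleR_add_left)
  then show ?thesis
    unfolding invariant_halfline_def .
qed

lemma exists_invariant_halfline:
  obtains \<eta> h where "invariant_halfline g \<eta> h"
proof -
  obtain A b where "stochastic A"
    and fixpoints: "\<exists>\<^sub>F t in at_top. g ((t / (t + 1)) *\<^sub>R discounted_solution A b (t / (t + 1)))
      = discounted_solution A b (t / (t + 1))"
    by (rule discounted_fixpoints_frequently_on_one_piece)
  obtain \<eta> h where err:
    "((\<lambda>t. discounted_solution A b (t / (t + 1)) - (t + 1) *\<^sub>R \<eta> - h) \<longlongrightarrow> 0) at_top"
    using stochastic_discounted_solution_along_halfline[OF \<open>stochastic A\<close>] by blast
  define bound where
    "bound t = norm h / (t + 1) + 2 * norm (discounted_solution A b (t / (t + 1)) - (t + 1) *\<^sub>R \<eta> - h)"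
    for t :: real
  have "((\<lambda>t::real. norm h / (t + 1)) \<longlongrightarrow> 0) at_top"
    by real_asymp
  then have "(bound \<longlongrightarrow> 0 + 2 * norm (0::real^'n)) at_top"
    unfolding bound_def by (intro tendsto_intros err)
  then have "(bound \<longlongrightarrow> 0) at_top"
    by simp
  have "invariant_halfline g \<eta> h"
  proof (rule frequently_almost_invariant_imp_invariant)
    fix \<epsilon> :: real and i
    assume "\<epsilon> > 0"
    have "\<forall>\<^sub>F t in at_top. bound t \<le> \<epsilon> \<and> t \<ge> 0"
      using order_tendstoD(2)[OF \<open>(bound \<longlongrightarrow> 0) at_top\<close> \<open>\<epsilon> > 0\<close>] eventually_ge_at_top[of 0]
      by eventually_elim simp
    with fixpoints show "\<exists>\<^sub>F t in at_top. \<bar>g (t *\<^sub>R \<eta> + h) $ i - ((t + 1) *\<^sub>R \<eta> + h) $ i\<bar> \<le> \<epsilon>"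
      by (rule frequently_eventually_frequently[THEN frequently_elim1])
        (use discounted_fixpoint_near_halfline[of _ _ \<eta> h i] in \<open>fastforce simp: bound_def\<close>)
  qed
  then show ?thesis
    using that by blast
qed

end

section \<open>The map gbar\<close>

context polyhedral_convex_topical
begin

lemma cycle_time_invariant_halfline:
  obtains h where "invariant_halfline g (cycle_time g) h"
  using exists_invariant_halfline cycle_time_eqI by metis

lemma recession_cycle_time: "recession g (cycle_time g) = cycle_time g"
proof -
  obtain h where "invariant_halfline g (cycle_time g) h"
    by (rule cycle_time_invariant_halfline)
  then have "\<forall>\<^sub>F t in at_top. t *\<^sub>R recession g (cycle_time g) + tangent_at_infinity g (cycle_time g) h
      = (t + 1) *\<^sub>R cycle_time g + h"
    using halfline_expansion[of "cycle_time g" h] unfolding invariant_halfline_def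
    by eventually_elim simp
  then have "\<forall>\<^sub>F t in at_top. \<bar>t * (recession g (cycle_time g) $ i - cycle_time g $ i)
      + (tangent_at_infinity g (cycle_time g) h $ i - cycle_time g $ i - h $ i)\<bar> \<le> 0" for i
    by eventually_elim (simp add: vec_eq_iff algebra_simps)
  then have "recession g (cycle_time g) $ i - cycle_time g $ i = 0" for i
    by (rule affine_bounded_at_top_imp_slope_zero)
  then show ?thesis
    by (simp add: vec_eq_iff)
qed

lemma gbar_halfline:
  "\<forall>\<^sub>F t in at_top. g (t *\<^sub>R cycle_time g + y) = (t + 1) *\<^sub>R cycle_time g + gbar g y"
  using halfline_expansion[of "cycle_time g" y]
  by eventually_elim (simp add: recession_cycle_time gbar_def algebra_simps)

lemma gbar_halfline_common:
  obtains t where "g (t *\<^sub>R cycle_time g + x) = (t + 1) *\<^sub>R cycle_time g + gbar g x"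
    and "g (t *\<^sub>R cycle_time g + y) = (t + 1) *\<^sub>R cycle_time g + gbar g y"
  using eventually_happens'[OF trivial_limit_at_top_linorder eventually_conj[OF gbar_halfline gbar_halfline]]
  by blast

lemma topical_gbar: "topical (gbar g)"
proof
  show "order_preserving (gbar g)"
    unfolding order_preserving_def
  proof (intro allI impI)
    fix x y :: "real^'n"
    assume "x \<le> y"
    obtain t where "g (t *\<^sub>R cycle_time g + x) = (t + 1) *\<^sub>R cycle_time g + gbar g x"
      and "g (t *\<^sub>R cycle_time g + y) = (t + 1) *\<^sub>R cycle_time g + gbar g y"
      by (rule gbar_halfline_common)
    moreover have "g (t *\<^sub>R cycle_time g + x) \<le> g (t *\<^sub>R cycle_time g + y)"
      using \<open>x \<le> y\<close> by (intro mono) (simp add: less_eq_vec_def)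
    ultimately show "gbar g x \<le> gbar g y"
      by (simp add: less_eq_vec_def)
  qed
  show "additively_homogeneous (gbar g)"
    unfolding additively_homogeneous_def
  proof (intro allI)
    fix l and x :: "real^'n"
    obtain t where "g (t *\<^sub>R cycle_time g + (cvec l + x)) = (t + 1) *\<^sub>R cycle_time g + gbar g (cvec l + x)"
      and "g (t *\<^sub>R cycle_time g + x) = (t + 1) *\<^sub>R cycle_time g + gbar g x"
      by (rule gbar_halfline_common)
    moreover have "g (t *\<^sub>R cycle_time g + (cvec l + x)) = cvec l + g (t *\<^sub>R cycle_time g + x)"
      using add_cvec[of l "t *\<^sub>R cycle_time g + x"] by (simp add: algebra_simps)
    ultimately show "gbar g (cvec l + x) = cvec l + gbar g x"
      by (simp add: algebra_simps)
  qed
qed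

lemma invariant_halfline_iff_gbar_fixpoint:
  "invariant_halfline g (cycle_time g) u \<longleftrightarrow> gbar g u = u"
proof
  assume "invariant_halfline g (cycle_time g) u"
  then obtain t where "g (t *\<^sub>R cycle_time g + u) = (t + 1) *\<^sub>R cycle_time g + u"
    and "g (t *\<^sub>R cycle_time g + u) = (t + 1) *\<^sub>R cycle_time g + gbar g u"
    using eventually_happens'[OF trivial_limit_at_top_linorder eventually_conj[OF _ gbar_halfline]]
    unfolding invariant_halfline_def by blast
  then show "gbar g u = u"
    by simp
next
  assume "gbar g u = u"
  then show "invariant_halfline g (cycle_time g) u"
    using gbar_halfline[of u] unfolding invariant_halfline_def by simp
qed

lemma super_invariant_halfline_imp_gbar_le:
  assumes "super_invariant_halfline g (cycle_time g) v"
  shows "gbar g v \<le> v"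
proof -
  obtain t where "g (t *\<^sub>R cycle_time g + v) \<le> (t + 1) *\<^sub>R cycle_time g + v"
    and "g (t *\<^sub>R cycle_time g + v) = (t + 1) *\<^sub>R cycle_time g + gbar g v"
    using eventually_happens'[OF trivial_limit_at_top_linorder eventually_conj[OF _ gbar_halfline]]
      assms unfolding super_invariant_halfline_def by blast
  then show ?thesis
    by (simp add: less_eq_vec_def)
qed

text \<open>A piece of g that is active along the half-line through u supplies a subgradient of gbar
  at u.\<close>

lemma subdiff_gbar_nonempty: "\<exists>M. M \<in> subdiff (gbar g) u"
proof -
  obtain R where "finite R"
    and minorant: "\<And>A b. (A, b) \<in> R \<Longrightarrow> stochastic A \<and> (\<forall>y. A *v y + b \<le> g y)"
    and cover: "\<And>x. \<exists>(A, b)\<in>R. g x = A *v x + b"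
    using finite_stochastic_minorants by blast
  have "\<forall>\<^sub>F t in at_top. \<exists>(A, b)\<in>R. g (t *\<^sub>R cycle_time g + u) = A *v (t *\<^sub>R cycle_time g + u) + b"
    using cover by (intro always_eventually) blast
  from frequently_pigeonhole[OF \<open>finite R\<close> this trivial_limit_at_top_linorder]
  obtain A b where "(A, b) \<in> R"
    and active: "\<exists>\<^sub>F t in at_top. g (t *\<^sub>R cycle_time g + u) = A *v (t *\<^sub>R cycle_time g + u) + b"
    by auto
  have "A *v (x - u) \<le> gbar g x - gbar g u" for x
  proof -
    obtain t where t: "g (t *\<^sub>R cycle_time g + u) = A *v (t *\<^sub>R cycle_time g + u) + b"
      and gx: "g (t *\<^sub>R cycle_time g + x) = (t + 1) *\<^sub>R cycle_time g + gbar g x"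
      and gu: "g (t *\<^sub>R cycle_time g + u) = (t + 1) *\<^sub>R cycle_time g + gbar g u"
      using frequently_ex[OF frequently_eventually_frequently[OF active
            eventually_conj[OF gbar_halfline gbar_halfline]]] by blast
    have "A *v (t *\<^sub>R cycle_time g + x) + b = g (t *\<^sub>R cycle_time g + u) + A *v (x - u)"
      unfolding t by (simp add: matrix_vector_right_distrib matrix_vector_mult_diff_distrib)
    then have "g (t *\<^sub>R cycle_time g + u) + A *v (x - u) \<le> g (t *\<^sub>R cycle_time g + x)"
      using minorant[OF \<open>(A, b) \<in> R\<close>] by metis
    then show ?thesis
      unfolding gx gu by (simp add: less_eq_vec_def algebra_simps)
  qed
  then show ?thesis
    using minorant[OF \<open>(A, b) \<in> R\<close>] unfolding subdiff_def by blast
qed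

lemma gbar_critical_component:
  assumes "i \<in> critical_nodes g" and "gbar g y \<le> y"
  shows "gbar g y $ i = y $ i"
proof -
  obtain u M F where u: "gbar g u = u" and M: "M \<in> subdiff (gbar g) u"
    and F: "recurrence_class M F" "i \<in> F"
    using assms(1) unfolding critical_nodes_def critical_nodes_of_def by blast
  have "stochastic M" and sub: "\<And>j. (M *v (y - u)) $ j \<le> gbar g y $ j - u $ j"
    using M u by (auto simp: subdiff_def less_eq_vec_def)
  moreover have "(M *v (y - u)) $ j \<le> (y - u) $ j" for j
    using sub[of j] spec[OF assms(2)[unfolded less_eq_vec_def], of j] by simp
  ultimately have "(M *v (y - u)) $ i = (y - u) $ i"
    using recurrence_class_superharmonic_imp_harmonic F by blast
  then show ?thesis
    using sub[of i] spec[OF assms(2)[unfolded less_eq_vec_def], of i] by simp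
qed

lemma gbar_fixpoint_le_if_critical_eq:
  assumes p: "gbar g p = p" and q: "gbar g q = q" and eq: "\<forall>i\<in>critical_nodes g. p $ i = q $ i"
  shows "q \<le> p"
proof -
  obtain M where M: "M \<in> subdiff (gbar g) q"
    using subdiff_gbar_nonempty by blast
  then have "stochastic M" and "M *v (p - q) \<le> gbar g p - gbar g q"
    by (simp_all add: subdiff_def)
  then have "stochastic M" and "\<forall>i. (M *v (p - q)) $ i \<le> (p - q) $ i"
    using p q by (simp_all add: less_eq_vec_def)
  then obtain F j where "recurrence_class M F" "j \<in> F" and min: "\<forall>i. (p - q) $ j \<le> (p - q) $ i"
    by (rule superharmonic_min_on_recurrence_class)
  then have "j \<in> critical_nodes g"
    unfolding critical_nodes_def critical_nodes_of_def using q M by blast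
  then show ?thesis
    using eq min by (simp add: less_eq_vec_def)
qed

lemma gbar_fixpoint_unique_on_critical:
  assumes "gbar g p = p" and "gbar g q = q" and "\<forall>i\<in>critical_nodes g. p $ i = q $ i"
  shows "p = q"
  using gbar_fixpoint_le_if_critical_eq[OF assms] gbar_fixpoint_le_if_critical_eq[OF assms(2,1)] assms(3)
  by (simp add: order_antisym)

lemma gbar_orbit_limit:
  assumes "super_invariant_halfline g (cycle_time g) v"
  obtains u where "(\<lambda>k. (gbar g ^^ k) v) \<longlonglongrightarrow> u" and "gbar g u = u"
    and "\<And>i. i \<in> critical_nodes g \<Longrightarrow> u $ i = v $ i"
proof -
  interpret gbar: topical "gbar g"
    by (rule topical_gbar)
  have "gbar g v \<le> v"
    using assms by (rule super_invariant_halfline_imp_gbar_le)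
  obtain h where "invariant_halfline g (cycle_time g) h"
    by (rule cycle_time_invariant_halfline)
  then obtain u where lim: "(\<lambda>k. (gbar g ^^ k) v) \<longlonglongrightarrow> u" and "gbar g u = u"
    using gbar.decreasing_orbit_converges[OF _ \<open>gbar g v \<le> v\<close>] invariant_halfline_iff_gbar_fixpoint
    by metis
  have orbit: "(gbar g ^^ k) v $ i = v $ i" if "i \<in> critical_nodes g" for i k
  proof (induction k)
    case (Suc k)
    then show ?case
      using gbar_critical_component[OF that gbar.orbit_decreasing[OF \<open>gbar g v \<le> v\<close>]] by simp
  qed simp
  have "u $ i = v $ i" if "i \<in> critical_nodes g" for i
    using LIMSEQ_unique[OF tendsto_vec_nth[OF lim]] orbit[OF that] by simp
  then show ?thesis
    using that lim \<open>gbar g u = u\<close> by blast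
qed

end

theorem corollary3p4:
  fixes g :: "real^'n \<Rightarrow> real^'n" and v :: "real^'n"
  assumes "polyhedral_map g" and "coord_convex g"
    and "order_preserving g" and "additively_homogeneous g"
    and "super_invariant_halfline g (cycle_time g) v"
  shows "\<exists>u. ((\<lambda>k. (gbar g ^^ k) v) \<longlonglongrightarrow> u)
           \<and> invariant_halfline g (cycle_time g) u
           \<and> (\<forall>\<^sub>F t in at_top. \<forall>i\<in>critical_nodes g.
                 (t *\<^sub>R cycle_time g + u) $ i = (t *\<^sub>R cycle_time g + v) $ i)
           \<and> (\<forall>\<eta>' u'. invariant_halfline g \<eta>' u'
                 \<and> (\<forall>\<^sub>F t in at_top. \<forall>i\<in>critical_nodes g.
                      (t *\<^sub>R \<eta>' + u') $ i = (t *\<^sub>R cycle_time g + v) $ i)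
                 \<longrightarrow> \<eta>' = cycle_time g \<and> u' = u)"
proof -
  interpret polyhedral_convex_topical g
    using assms(1-4) by unfold_locales
  obtain u where lim: "(\<lambda>k. (gbar g ^^ k) v) \<longlonglongrightarrow> u" and "gbar g u = u"
    and critical: "\<And>i. i \<in> critical_nodes g \<Longrightarrow> u $ i = v $ i"
    using gbar_orbit_limit[OF assms(5)] by blast
  show ?thesis
  proof (intro exI[of _ u] conjI allI impI)
    fix \<eta>' u'
    assume u': "invariant_halfline g \<eta>' u' \<and> (\<forall>\<^sub>F t in at_top. \<forall>i\<in>critical_nodes g.
        (t *\<^sub>R \<eta>' + u') $ i = (t *\<^sub>R cycle_time g + v) $ i)"
    then show "\<eta>' = cycle_time g"
      using cycle_time_eqI by metis
    with u' have "gbar g u' = u'"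
      and "\<forall>i\<in>critical_nodes g. u' $ i = u $ i"
      using eventually_happens'[OF trivial_limit_at_top_linorder] critical
      by (auto simp: invariant_halfline_iff_gbar_fixpoint)
    then show "u' = u"
      using gbar_fixpoint_unique_on_critical \<open>gbar g u = u\<close> by blast
  qed (use lim \<open>gbar g u = u\<close> critical in \<open>simp_all add: invariant_halfline_iff_gbar_fixpoint\<close>)
qed

end
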